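(* Let $\theta>0$ and $1\le p_i,q_i<\infty$ for $i=1,2,3$. Suppose there exist positive constants $c$ and $C$ such that $$\|xy\|_{l^{q_3),\theta}}\le c\,\|x\|_{l^{q_1),\theta}}\|y\|_{l^{q_2),\theta}}\quad\text{for all } x=\{x_k\}_{k\in X}\in l^{q_1),\theta},\ y=\{y_k\}_{k\in X}\in l^{q_2),\theta},$$ where $xy=\{x_ky_k\}_{k\in X}$, and $$\|(hs)\chi_E\|_{L^{p_3}}\le C\,\|h\chi_E\|_{L^{p_1}}\|s\chi_E\|_{L^{p_2}}\quad\text{for all } h\in L^{p_1},\ s\in L^{p_2},$$ for every subset $E\subset\mathbb R$ of finite Lebesgue measure. Then for all $f\in l^{q_1),\theta}(L^{p_1})$ and $g\in l^{q_2),\theta}(L^{p_2})$, $$\|fg\|_{p_3,q_3),\theta}\le cC\,\|f\|_{p_1,q_1),\theta}\|g\|_{p_2,q_2),\theta}.$$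
   Context: Let $X$ be one of $\mathbb N,\mathbb N_0,\mathbb Z$ and $I_k=[k,k+1)$ for $k\in X$. For $1\le q<\infty$ and $\theta>0$, $l^{q),\theta}$ is the space of real sequences $x=\{x_k\}_{k\in X}$ with $\|x\|_{l^{q),\theta}}:=\sup_{\varepsilon>0}\varepsilon^{\frac{\theta}{q(1+\varepsilon)}}\|x\|_{l^{q(1+\varepsilon)}}<\infty$. For $1\le p<\infty$, $l^{q),\theta}(L^p)$ is the space of complex-valued measurable $g$ on $\bigcup_{k\in X}I_k$ with $g\chi_{I_k}\in L^p$ for all $k$ and $\|g\|_{p,q),\theta}:=\big\|\{\|g\chi_{I_k}\|_{L^p}\}_{k\in X}\big\|_{l^{q),\theta}}=\sup_{\varepsilon>0}\Big(\varepsilon^{\theta}\sum_{k\in X}\big(\int_{I_k}|g|^p\big)^{\frac{q(1+\varepsilon)}{p}}\Big)^{\frac{1}{q(1+\varepsilon)}}<\infty$. *)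

theory Defs
  imports "HOL-Analysis.Analysis"
begin

text \<open>Power of an extended nonnegative real, for positive exponents: \<open>\<infinity>\<close> stays \<open>\<infinity>\<close>.\<close>
definition epowr :: "ennreal \<Rightarrow> real \<Rightarrow> ennreal" where
  "epowr t a = (if t = \<infinity> then \<infinity> else ennreal (enn2real t powr a))"

text \<open>The index set X is one of N = {1..}, N0 = {0..}, Z, viewed inside int.\<close>
definition admissible_index :: "int set \<Rightarrow> bool" where
  "admissible_index X \<longleftrightarrow> X = {1..} \<or> X = {0..} \<or> X = UNIV"

definition lr_norm :: "int set \<Rightarrow> real \<Rightarrow> (int \<Rightarrow> real) \<Rightarrow> ennreal" where
  "lr_norm X r x = epowr (\<integral>\<^sup>+ k. ennreal (\<bar>x k\<bar> powr r) \<partial>count_space X) (1 / r)"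

definition grand_seq_norm :: "int set \<Rightarrow> real \<Rightarrow> real \<Rightarrow> (int \<Rightarrow> real) \<Rightarrow> ennreal" where
  "grand_seq_norm X q \<theta> x =
     (SUP \<epsilon>\<in>{0<..}. ennreal (\<epsilon> powr (\<theta> / (q * (1 + \<epsilon>)))) * lr_norm X (q * (1 + \<epsilon>)) x)"

definition in_grand_seq :: "int set \<Rightarrow> real \<Rightarrow> real \<Rightarrow> (int \<Rightarrow> real) \<Rightarrow> bool" where
  "in_grand_seq X q \<theta> x \<longleftrightarrow> grand_seq_norm X q \<theta> x < \<infinity>"

definition Lp_on :: "real \<Rightarrow> (real \<Rightarrow> complex) \<Rightarrow> real set \<Rightarrow> ennreal" where
  "Lp_on p g E = epowr (\<integral>\<^sup>+ t. indicator E t * ennreal (cmod (g t) powr p) \<partial>lebesgue) (1 / p)"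

definition in_Lp :: "real \<Rightarrow> (real \<Rightarrow> complex) \<Rightarrow> bool" where
  "in_Lp p h \<longleftrightarrow> h \<in> borel_measurable lebesgue \<and> Lp_on p h UNIV < \<infinity>"

definition unit_interval :: "int \<Rightarrow> real set" where
  "unit_interval k = {real_of_int k..<real_of_int k + 1}"

definition grand_mixed_norm :: "int set \<Rightarrow> real \<Rightarrow> real \<Rightarrow> real \<Rightarrow> (real \<Rightarrow> complex) \<Rightarrow> ennreal" where
  "grand_mixed_norm X p q \<theta> g =
     grand_seq_norm X q \<theta> (\<lambda>k. enn2real (Lp_on p g (unit_interval k)))"

definition in_grand_mixed :: "int set \<Rightarrow> real \<Rightarrow> real \<Rightarrow> real \<Rightarrow> (real \<Rightarrow> complex) \<Rightarrow> bool" where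
  "in_grand_mixed X p q \<theta> g \<longleftrightarrow>
     g \<in> borel_measurable lebesgue \<and>
     (\<forall>k\<in>X. Lp_on p g (unit_interval k) < \<infinity>) \<and>
     grand_mixed_norm X p q \<theta> g < \<infinity>"

end

theory Submission
  imports Defs
begin

text \<open>On each unit interval \<open>I_k\<close> apply the assumed Hoelder inequality to the truncations
  \<open>f \<chi>(I_k)\<close> and \<open>g \<chi>(I_k)\<close>, which do lie in \<open>L^p1\<close> and \<open>L^p2\<close>: the sequence of local
  \<open>L^p3\<close> norms of \<open>fg\<close> is dominated termwise by \<open>C\<close> times the product of the local norm
  sequences of \<open>f\<close> and \<open>g\<close>. The grand sequence norm is monotone and positively homogeneous,
  so the assumed sequence Hoelder inequality finishes the proof.\<close>

lemma epowr_mono: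
  assumes "t \<le> s" "a > 0"
  shows "epowr t a \<le> epowr s a"
proof (cases "s = \<infinity>")
  case True
  then show ?thesis by (simp add: epowr_def)
next
  case False
  then have "t \<noteq> \<infinity>"
    using assms(1) by (metis infinity_ennreal_def top.extremum_uniqueI)
  moreover have "enn2real t \<le> enn2real s"
    using assms(1) False by (simp add: enn2real_mono less_top)
  ultimately show ?thesis
    using False assms by (simp add: epowr_def powr_mono2 ennreal_leI)
qed

lemma epowr_cmult_powr:
  assumes "C > 0" "r > 0"
  shows "epowr (ennreal (C powr r) * t) (1 / r) = ennreal C * epowr t (1 / r)"
proof (cases "t = \<infinity>")
  case True
  then show ?thesis using assms by (simp add: epowr_def ennreal_mult_top)
next
  case False
  then obtain u where u: "t = ennreal u" "u \<ge> 0"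
    by (metis ennreal_cases infinity_ennreal_def)
  have "(C powr r * u) powr (1 / r) = C * u powr (1 / r)"
    using assms u by (simp add: powr_mult powr_powr)
  then show ?thesis
    using assms u by (simp add: epowr_def ennreal_mult[symmetric])
qed

lemma lr_norm_cmult:
  assumes "C > 0" "r > 0"
  shows "lr_norm X r (\<lambda>k. C * z k) = ennreal C * lr_norm X r z"
proof -
  have "(\<integral>\<^sup>+ k. ennreal (\<bar>C * z k\<bar> powr r) \<partial>count_space X)
      = (\<integral>\<^sup>+ k. ennreal (C powr r) * ennreal (\<bar>z k\<bar> powr r) \<partial>count_space X)"
    using assms by (intro nn_integral_cong) (simp add: abs_mult powr_mult ennreal_mult)
  also have "\<dots> = ennreal (C powr r) * (\<integral>\<^sup>+ k. ennreal (\<bar>z k\<bar> powr r) \<partial>count_space X)"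
    by (simp add: nn_integral_cmult)
  finally show ?thesis
    unfolding lr_norm_def using epowr_cmult_powr[OF assms] by simp
qed

lemma lr_norm_mono:
  assumes "r > 0" "\<And>k. k \<in> X \<Longrightarrow> \<bar>a k\<bar> \<le> \<bar>b k\<bar>"
  shows "lr_norm X r a \<le> lr_norm X r b"
  unfolding lr_norm_def
  by (intro epowr_mono nn_integral_mono ennreal_leI powr_mono2) (use assms in auto)

lemma grand_seq_norm_mono:
  assumes "q > 0" "\<And>k. k \<in> X \<Longrightarrow> \<bar>a k\<bar> \<le> \<bar>b k\<bar>"
  shows "grand_seq_norm X q \<theta> a \<le> grand_seq_norm X q \<theta> b"
  unfolding grand_seq_norm_def
proof (intro SUP_mono bexI)
  fix e :: real
  assume "e \<in> {0<..}"
  then show "ennreal (e powr (\<theta> / (q * (1 + e)))) * lr_norm X (q * (1 + e)) a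
      \<le> ennreal (e powr (\<theta> / (q * (1 + e)))) * lr_norm X (q * (1 + e)) b"
    using assms by (intro mult_left_mono lr_norm_mono) auto
qed

lemma grand_seq_norm_cmult:
  assumes "C > 0" "q > 0"
  shows "grand_seq_norm X q \<theta> (\<lambda>k. C * z k) = ennreal C * grand_seq_norm X q \<theta> z"
proof -
  have "grand_seq_norm X q \<theta> (\<lambda>k. C * z k)
      = (SUP e\<in>{0<..}. ennreal C * (ennreal (e powr (\<theta> / (q * (1 + e)))) * lr_norm X (q * (1 + e)) z))"
    unfolding grand_seq_norm_def using assms
    by (intro SUP_cong refl) (auto simp: lr_norm_cmult mult_ac)
  then show ?thesis
    unfolding grand_seq_norm_def by (simp add: SUP_mult_left_ennreal)
qed

lemma Lp_on_indicator_mult: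
  assumes "p > 0"
  shows "Lp_on p (\<lambda>t. indicator E t * f t) F = Lp_on p f (E \<inter> F)"
proof -
  have "indicator F t * ennreal (cmod (indicator E t * f t) powr p)
      = indicator (E \<inter> F) t * ennreal (cmod (f t) powr p)" for t
    using assms by (auto simp: indicator_def)
  then show ?thesis unfolding Lp_on_def by simp
qed

lemma sets_lebesgue_unit_interval: "unit_interval k \<in> sets lebesgue"
  unfolding unit_interval_def by simp

lemma emeasure_lebesgue_unit_interval: "emeasure lebesgue (unit_interval k) = 1"
  unfolding unit_interval_def by (simp add: emeasure_completion emeasure_lborel_Ico)

lemma Lp_on_mult_le_local:
  assumes p: "p1 > 0" "p2 > 0" "p3 > 0"
    and hoelder: "\<And>h s. in_Lp p1 h \<Longrightarrow> in_Lp p2 s \<Longrightarrow>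
                Lp_on p3 (\<lambda>t. h t * s t) E \<le> ennreal C * Lp_on p1 h E * Lp_on p2 s E"
    and E: "E \<in> sets lebesgue"
    and f: "f \<in> borel_measurable lebesgue" "Lp_on p1 f E < \<infinity>"
    and g: "g \<in> borel_measurable lebesgue" "Lp_on p2 g E < \<infinity>"
  shows "Lp_on p3 (\<lambda>t. f t * g t) E \<le> ennreal C * Lp_on p1 f E * Lp_on p2 g E"
proof -
  define h where "h t = indicator E t * f t" for t
  define s where "s t = indicator E t * g t" for t
  have h_E: "Lp_on p1 h F = Lp_on p1 f (E \<inter> F)" for F
    unfolding h_def using p(1) by (rule Lp_on_indicator_mult)
  have s_E: "Lp_on p2 s F = Lp_on p2 g (E \<inter> F)" for F
    unfolding s_def using p(2) by (rule Lp_on_indicator_mult)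
  have "(\<lambda>t. h t * s t) = (\<lambda>t. indicator E t * (f t * g t))"
    by (auto simp: h_def s_def indicator_def)
  then have hs_E: "Lp_on p3 (\<lambda>t. h t * s t) E = Lp_on p3 (\<lambda>t. f t * g t) E"
    using p by (simp add: Lp_on_indicator_mult)
  have "h \<in> borel_measurable lebesgue"
    unfolding h_def using f(1) E by measurable
  then have "in_Lp p1 h"
    using f(2) by (simp add: in_Lp_def h_E)
  have "s \<in> borel_measurable lebesgue"
    unfolding s_def using g(1) E by measurable
  then have "in_Lp p2 s"
    using g(2) by (simp add: in_Lp_def s_E)
  then show ?thesis
    using hoelder[OF \<open>in_Lp p1 h\<close> \<open>in_Lp p2 s\<close>] hs_E h_E[of E] s_E[of E] by simp
qed

lemma grand_seq_norm_enn2real_le_mult: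
  assumes "q > 0" "C > 0"
    and "\<And>k. k \<in> X \<Longrightarrow> a k \<le> ennreal C * b k * d k"
    and "\<And>k. k \<in> X \<Longrightarrow> b k < \<infinity>" "\<And>k. k \<in> X \<Longrightarrow> d k < \<infinity>"
  shows "grand_seq_norm X q \<theta> (\<lambda>k. enn2real (a k))
      \<le> ennreal C * grand_seq_norm X q \<theta> (\<lambda>k. enn2real (b k) * enn2real (d k))"
proof -
  have "\<bar>enn2real (a k)\<bar> \<le> \<bar>C * (enn2real (b k) * enn2real (d k))\<bar>" if "k \<in> X" for k
  proof -
    have "a k \<le> ennreal (C * (enn2real (b k) * enn2real (d k)))"
      using assms that by (simp add: ennreal_mult ennreal_enn2real mult.assoc)
    then show ?thesis
      using \<open>C > 0\<close> by (simp add: enn2real_leI)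
  qed
  then have "grand_seq_norm X q \<theta> (\<lambda>k. enn2real (a k))
      \<le> grand_seq_norm X q \<theta> (\<lambda>k. C * (enn2real (b k) * enn2real (d k)))"
    by (rule grand_seq_norm_mono[OF \<open>q > 0\<close>])
  then show ?thesis
    using assms(1,2) by (simp add: grand_seq_norm_cmult)
qed

theorem lemma3p1:
  fixes X :: "int set" and \<theta> c C p1 p2 p3 q1 q2 q3 :: real
    and f g :: "real \<Rightarrow> complex"
  assumes X: "admissible_index X"
    and \<theta>: "\<theta> > 0"
    and p: "1 \<le> p1" "1 \<le> p2" "1 \<le> p3"
    and q: "1 \<le> q1" "1 \<le> q2" "1 \<le> q3"
    and c: "c > 0" and C: "C > 0"
    and seq: "\<And>x y. in_grand_seq X q1 \<theta> x \<Longrightarrow> in_grand_seq X q2 \<theta> y \<Longrightarrow>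
                grand_seq_norm X q3 \<theta> (\<lambda>k. x k * y k)
                  \<le> ennreal c * grand_seq_norm X q1 \<theta> x * grand_seq_norm X q2 \<theta> y"
    and hoelder: "\<And>E h s. E \<in> sets lebesgue \<Longrightarrow> emeasure lebesgue E < \<infinity> \<Longrightarrow>
                in_Lp p1 h \<Longrightarrow> in_Lp p2 s \<Longrightarrow>
                Lp_on p3 (\<lambda>t. h t * s t) E \<le> ennreal C * Lp_on p1 h E * Lp_on p2 s E"
    and f: "in_grand_mixed X p1 q1 \<theta> f"
    and g: "in_grand_mixed X p2 q2 \<theta> g"
  shows "grand_mixed_norm X p3 q3 \<theta> (\<lambda>t. f t * g t)
           \<le> ennreal (c * C) * grand_mixed_norm X p1 q1 \<theta> f * grand_mixed_norm X p2 q2 \<theta> g"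
proof -
  define x where "x k = enn2real (Lp_on p1 f (unit_interval k))" for k
  define y where "y k = enn2real (Lp_on p2 g (unit_interval k))" for k
  have f_local: "Lp_on p1 f (unit_interval k) < \<infinity>"
    and g_local: "Lp_on p2 g (unit_interval k) < \<infinity>" if "k \<in> X" for k
    using f g that by (auto simp: in_grand_mixed_def)
  have fg_local: "Lp_on p3 (\<lambda>t. f t * g t) (unit_interval k)
      \<le> ennreal C * Lp_on p1 f (unit_interval k) * Lp_on p2 g (unit_interval k)" if "k \<in> X" for k
  proof (rule Lp_on_mult_le_local)
    show "Lp_on p3 (\<lambda>t. h t * s t) (unit_interval k)
        \<le> ennreal C * Lp_on p1 h (unit_interval k) * Lp_on p2 s (unit_interval k)"
      if "in_Lp p1 h" "in_Lp p2 s" for h s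
      using that by (intro hoelder sets_lebesgue_unit_interval) (simp_all add: emeasure_lebesgue_unit_interval)
  qed (use p f g f_local g_local \<open>k \<in> X\<close> sets_lebesgue_unit_interval in \<open>auto simp: in_grand_mixed_def\<close>)
  have "grand_mixed_norm X p3 q3 \<theta> (\<lambda>t. f t * g t)
      \<le> ennreal C * grand_seq_norm X q3 \<theta> (\<lambda>k. x k * y k)"
    unfolding grand_mixed_norm_def x_def y_def
    using q(3) by (intro grand_seq_norm_enn2real_le_mult[OF _ C fg_local f_local g_local]) simp_all
  also have "\<dots> \<le> ennreal C * (ennreal c * grand_seq_norm X q1 \<theta> x * grand_seq_norm X q2 \<theta> y)"
    using f g
    by (intro mult_left_mono seq)
       (simp_all add: in_grand_seq_def in_grand_mixed_def grand_mixed_norm_def x_def[abs_def] y_def[abs_def])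
  also have "\<dots> = ennreal (c * C) * grand_mixed_norm X p1 q1 \<theta> f * grand_mixed_norm X p2 q2 \<theta> g"
    using c C by (simp add: grand_mixed_norm_def x_def[abs_def] y_def[abs_def] ennreal_mult mult_ac)
  finally show ?thesis .
qed

end
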